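(* Let $\rho_1\in(0,1)$, $\rho_2\in(0,1-\rho_1)$ and $\eta\sim\mu^{\rho_1,\rho_2}$ constructed from $(a(i))$, $(s(i))$ as in the context. Then for any $x\in\mathbb{Z}$, \[ h^{\rho_1}(x,0)=\hat h^{\rho_1}(x,0)+\sup_{j\ge0}\{h^{\rho_1+\rho_2}(j,0)-\hat h^{\rho_1}(j,0)\}-\sup_{j\ge x}\{h^{\rho_1+\rho_2}(j,0)-h^{\rho_1+\rho_2}(x,0)-(\hat h^{\rho_1}(j,0)-\hat h^{\rho_1}(x,0))\}. \]
   Context: Queueing construction: $(a(i))_{i\in\mathbb{Z}}$, $(s(i))_{i\in\mathbb{Z}}$ independent families of i.i.d. Bernoulli variables with parameters $\rho_1$, $\rho_1+\rho_2$; $\mathcal{A}_{[i,j]}=\sum_{k=i}^ja(k)$, $\mathcal{S}_{[i,j]}=\sum_{k=i}^js(k)$ (empty sums $0$); $Q_i=\sup_{j\ge i-1}(\mathcal{A}_{[i,j]}-\mathcal{S}_{[i,j]})$; $d(i)=1$ iff $s(i)=1$ and ($a(i)=1$ or $Q_{i+1}\ge1$). The configuration $\eta$ has $\eta(i)=1$ if $d(i)=1$, $\eta(i)=2$ if $s(i)=1,d(i)=0$, $\eta(i)=+\infty$ otherwise; its law is $\mu^{\rho_1,\rho_2}$. For a $\{0,1\}$-valued configuration $\zeta$ define its height profile $g(0)=0$, $g(x)=\sum_{i=1}^x(1-2\zeta(i))$ for $x\ge1$, $g(x)=-\sum_{i=x+1}^0(1-2\zeta(i))$ for $x\le-1$.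 Then $h^{\rho_1}(\cdot,0)$, $h^{\rho_1+\rho_2}(\cdot,0)$, $\hat h^{\rho_1}(\cdot,0)$ are the height profiles of $\zeta=d$, $\zeta=s$, $\zeta=a$ respectively. *)

theory Defs
  imports "HOL-Probability.Probability"
begin

text \<open>Deterministic part of the queueing construction. Bernoulli variables are
  represented as booleans (True = 1).\<close>

definition cnt :: "(int \<Rightarrow> bool) \<Rightarrow> int \<Rightarrow> int \<Rightarrow> int" where
  "cnt b i j = (\<Sum>k\<in>{i..j}. of_bool (b k))"   (* empty sum 0 if j < i *)

definition Qlen :: "(int \<Rightarrow> bool) \<Rightarrow> (int \<Rightarrow> bool) \<Rightarrow> int \<Rightarrow> ereal" where
  "Qlen a s i = (SUP j\<in>{i - 1..}. ereal (of_int (cnt a i j - cnt s i j)))"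

definition dep :: "(int \<Rightarrow> bool) \<Rightarrow> (int \<Rightarrow> bool) \<Rightarrow> int \<Rightarrow> bool" where
  "dep a s i \<longleftrightarrow> s i \<and> (a i \<or> Qlen a s (i + 1) \<ge> 1)"

definition height :: "(int \<Rightarrow> bool) \<Rightarrow> int \<Rightarrow> int" where
  "height z x = (if x \<ge> 0 then (\<Sum>i\<in>{1..x}. 1 - 2 * of_bool (z i))
                 else - (\<Sum>i\<in>{x+1..0}. 1 - 2 * of_bool (z i)))"

end

theory Submission
  imports Defs
begin

text \<open>Write \<open>Q(i)\<close> for the queue length. Up to a factor 2, the increment of the difference of
  height profiles \<open>h\<^sup>\<rho>\<^sup>1\<^sup>+\<^sup>\<rho>\<^sup>2 - hat-h\<^sup>\<rho>\<^sup>1\<close> over \<open>(x, j]\<close> is the excess of arrivals over services in that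
  window, so the second supremum is \<open>2 Q(x + 1)\<close> and the first is \<open>2 Q(1)\<close>. Lindley's recursion
  \<open>Q(i) = max 0 (a(i) - s(i) + Q(i + 1))\<close> says exactly that \<open>a(i) - d(i) = Q(i) - Q(i + 1)\<close>, and
  summing over \<open>i\<close> gives \<open>h\<^sup>\<rho>\<^sup>1(x) - hat-h\<^sup>\<rho>\<^sup>1(x) = 2 Q(1) - 2 Q(x + 1)\<close>. The only probabilistic
  input is that the queue is finite: the walk \<open>n \<mapsto> \<Sum>\<^sub>k\<^sub>=\<^sub>1\<^sub>.\<^sub>.\<^sub>n (a(k) - s(k))\<close> has drift
  \<open>-\<rho>\<^sub>2 n\<close>, so by Hoeffding's inequality and Borel-Cantelli it is eventually negative almost surely.\<close>

lemma cnt_empty: "j < i \<Longrightarrow> cnt b i j = 0"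
  by (simp add: cnt_def)

lemma cnt_cons: "i \<le> j \<Longrightarrow> cnt b i j = of_bool (b i) + cnt b (i + 1) j"
proof -
  assume "i \<le> j"
  then have "{i..j} = insert i {i + 1..j}" by auto
  then show ?thesis by (simp add: cnt_def)
qed

lemma cnt_snoc: "i \<le> j + 1 \<Longrightarrow> cnt b i (j + 1) = cnt b i j + of_bool (b (j + 1))"
proof -
  assume "i \<le> j + 1"
  then have "{i..j + 1} = insert (j + 1) {i..j}" by auto
  then show ?thesis by (simp add: cnt_def add.commute)
qed

lemma height_0 [simp]: "height z 0 = 0"
  by (simp add: height_def)

lemma height_Suc: "height z (x + 1) = height z x + (1 - 2 * of_bool (z (x + 1)))"
proof -
  consider "x \<ge> 0" | "x = -1" | "x \<le> -2" by linarith
  then show ?thesis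
  proof cases
    case 1
    then have "{1..x + 1} = insert (x + 1) {1..x}" by auto
    with 1 show ?thesis by (simp add: height_def)
  next
    case 2
    then show ?thesis by (simp add: height_def)
  next
    case 3
    then have "{x + 1..0} = insert (x + 1) {x + 2..0}" by auto
    with 3 show ?thesis by (simp add: height_def add.commute)
  qed
qed

lemma height_diff_cnt: "x \<le> j \<Longrightarrow> height z j - height z x = (j - x) - 2 * cnt z (x + 1) j"
proof (induction j rule: int_ge_induct)
  case base
  then show ?case by (simp add: cnt_empty)
next
  case (step j)
  then show ?case by (simp add: height_Suc cnt_snoc)
qed

definition excess :: "(int \<Rightarrow> bool) \<Rightarrow> (int \<Rightarrow> bool) \<Rightarrow> int \<Rightarrow> int \<Rightarrow> int" where
  "excess A S i j = cnt A i j - cnt S i j"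

lemma excess_empty [simp]: "excess A S i (i - 1) = 0"
  by (simp add: excess_def cnt_empty)

lemma excess_cons:
  "i \<le> j \<Longrightarrow> excess A S i j = of_bool (A i) - of_bool (S i) + excess A S (i + 1) j"
  by (simp add: excess_def cnt_cons)

lemma height_diff_excess:
  "x \<le> j \<Longrightarrow> height S j - height S x - (height A j - height A x) = 2 * excess A S (x + 1) j"
  by (simp add: height_diff_cnt excess_def)

lemma int_Sup_mem:
  fixes X :: "int set"
  assumes "bdd_above X" "X \<noteq> {}"
  shows "Sup X \<in> X"
proof -
  obtain x b where x: "x \<in> X" and b: "\<And>y. y \<in> X \<Longrightarrow> y \<le> b"
    using assms by (auto simp: bdd_above_def)
  define m where "m = Max (X \<inter> {x..b})"
  have fin: "finite (X \<inter> {x..b})" and ne: "X \<inter> {x..b} \<noteq> {}"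
    using x b by auto
  have "m \<in> X"
    using Max_in[OF fin ne] by (simp add: m_def)
  moreover have "y \<le> m" if "y \<in> X" for y
  proof (cases "x \<le> y")
    case True
    with that b show ?thesis by (simp add: m_def fin)
  next
    case False
    moreover have "x \<le> m" using x b by (simp add: m_def fin)
    ultimately show ?thesis by simp
  qed
  ultimately show ?thesis
    using cSup_eq_maximum by metis
qed

text \<open>An integer version of \<^const>\<open>Qlen\<close>. The supremum in \<^typ>\<open>int\<close> of a set that is not
  bounded above is a junk value, so the two agree only under the boundedness hypothesis below.\<close>
definition queue :: "(int \<Rightarrow> bool) \<Rightarrow> (int \<Rightarrow> bool) \<Rightarrow> int \<Rightarrow> int" where
  "queue A S i = Sup (excess A S i ` {i - 1..})"

context
  fixes A S :: "int \<Rightarrow> bool"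
  assumes walk_bdd: "bdd_above ((\<lambda>j. height S j - height A j) ` {0..})"
begin

lemma bdd_above_excess: "bdd_above (excess A S i ` {i - 1..})"
proof -
  let ?W = "\<lambda>j. height S j - height A j"
  have "{i - 1..} \<subseteq> {i - 1..<0} \<union> {0..}" by auto
  then have "?W ` {i - 1..} \<subseteq> ?W ` {i - 1..<0} \<union> ?W ` {0..}" by blast
  then have "bdd_above (?W ` {i - 1..})"
    using walk_bdd by (meson bdd_above_Un bdd_above_finite bdd_above_mono finite_atLeastLessThan_int finite_imageI)
  then obtain B where B: "\<And>j. i - 1 \<le> j \<Longrightarrow> ?W j \<le> B"
    by (auto simp: bdd_above_def)
  have "excess A S i j \<le> max 0 (B - ?W (i - 1))" if "i - 1 \<le> j" for j
    using height_diff_excess[OF that, of S A] B[OF that] by simp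
  then show ?thesis
    by (intro bdd_aboveI2) auto
qed

lemma excess_le_queue: "i - 1 \<le> j \<Longrightarrow> excess A S i j \<le> queue A S i"
  unfolding queue_def by (rule cSUP_upper) (auto intro: bdd_above_excess)

lemma queue_attained: "\<exists>j\<ge>i - 1. excess A S i j = queue A S i"
  using int_Sup_mem[OF bdd_above_excess, of i] by (auto simp: queue_def)

lemma queue_nonneg: "0 \<le> queue A S i"
  using excess_le_queue[of i "i - 1"] by simp

lemma Qlen_eq_queue: "Qlen A S i = ereal (of_int (queue A S i))"
proof -
  obtain j where "j \<ge> i - 1" "excess A S i j = queue A S i"
    using queue_attained by blast
  then show ?thesis
    unfolding Qlen_def excess_def [symmetric]
    by (intro cSup_eq_maximum) (auto intro: rev_image_eqI simp: excess_le_queue)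
qed

lemma queue_Lindley: "queue A S i = max 0 (of_bool (A i) - of_bool (S i) + queue A S (i + 1))"
proof (rule antisym)
  obtain j where j: "j \<ge> i - 1" "excess A S i j = queue A S i"
    using queue_attained by blast
  show "queue A S i \<le> max 0 (of_bool (A i) - of_bool (S i) + queue A S (i + 1))"
  proof (cases "j = i - 1")
    case False
    with j have "i \<le> j" by simp
    with j show ?thesis using excess_cons excess_le_queue[of "i + 1" j] by force
  qed (use j in simp)
next
  obtain j where j: "j \<ge> i" "excess A S (i + 1) j = queue A S (i + 1)"
    using queue_attained[of "i + 1"] by auto
  then have "of_bool (A i) - of_bool (S i) + queue A S (i + 1) \<le> queue A S i"
    using excess_cons[of i j] excess_le_queue[of i j] by simp
  then show "max 0 (of_bool (A i) - of_bool (S i) + queue A S (i + 1)) \<le> queue A S i"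
    using queue_nonneg by simp
qed

lemma dep_eq_queue_diff: "of_bool (A i) - of_bool (dep A S i) = queue A S i - queue A S (i + 1)"
proof -
  have "dep A S i \<longleftrightarrow> S i \<and> (A i \<or> queue A S (i + 1) \<ge> 1)"
    by (simp add: dep_def Qlen_eq_queue one_ereal_def)
  then show ?thesis
    using queue_Lindley[of i] queue_nonneg[of "i + 1"] by (cases "A i"; cases "S i") auto
qed

lemma height_dep: "height (dep A S) x = height A x + 2 * queue A S 1 - 2 * queue A S (x + 1)"
proof (induction x rule: int_induct[where k = 0])
  case base
  then show ?case by simp
next
  case (step1 i)
  then show ?case
    using height_Suc[of "dep A S" i] height_Suc[of A i] dep_eq_queue_diff[of "i + 1"]
    by (simp add: algebra_simps)
next
  case (step2 i)
  then show ?case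
    using height_Suc[of "dep A S" "i - 1"] height_Suc[of A "i - 1"] dep_eq_queue_diff[of i]
    by (simp add: algebra_simps)
qed

lemma SUP_height_diff:
  "(SUP j\<in>{x..}. ereal (of_int (height S j - height S x - (height A j - height A x))))
     = ereal (of_int (2 * queue A S (x + 1)))"
proof -
  obtain j where "j \<ge> x" "excess A S (x + 1) j = queue A S (x + 1)"
    using queue_attained[of "x + 1"] by auto
  then show ?thesis
    by (intro cSup_eq_maximum) (auto intro: rev_image_eqI simp: height_diff_excess excess_le_queue)
qed

end

lemma bdd_above_range_if_eventually_le:
  fixes f :: "nat \<Rightarrow> 'a::linorder"
  assumes "eventually (\<lambda>n. f n \<le> c) sequentially"
  shows "bdd_above (range f)"
proof -
  obtain N where "\<And>n. n \<ge> N \<Longrightarrow> f n \<le> c"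
    using assms by (auto simp: eventually_sequentially)
  then have "f n \<le> max c (Max (f ` {..N}))" for n
    by (cases "N \<le> n") (auto simp: le_max_iff_disj)
  then show ?thesis
    by (rule bdd_aboveI2)
qed

lemma walk_bdd_if_eventually_negative:
  assumes "eventually (\<lambda>n. excess A S 1 (int n) < 0) sequentially"
  shows "bdd_above ((\<lambda>j. height S j - height A j) ` {0..})"
proof -
  have "bdd_above (range (\<lambda>n. 2 * excess A S 1 (int n)))"
    using assms by (intro bdd_above_range_if_eventually_le[where c = 0]) (auto elim: eventually_mono)
  moreover have "(\<lambda>j. height S j - height A j) ` {0..} \<subseteq> range (\<lambda>n. 2 * excess A S 1 (int n))"
  proof (rule image_subsetI)
    fix j :: int
    assume "j \<in> {0..}"
    then obtain n where "j = int n"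
      using zero_le_imp_eq_int by auto
    then show "height S j - height A j \<in> range (\<lambda>n. 2 * excess A S 1 (int n))"
      using height_diff_excess[of 0 j S A] by simp
  qed
  ultimately show ?thesis
    by (rule bdd_above_mono)
qed

lemma (in prob_space) AE_eventually_sum_negative:
  fixes X :: "'i \<Rightarrow> 'a \<Rightarrow> real" and I :: "nat \<Rightarrow> 'i set" and lo hi :: "'i \<Rightarrow> real"
  assumes indep: "indep_vars (\<lambda>_. borel) X UNIV"
    and bounded: "\<And>k. AE \<omega> in M. X k \<omega> \<in> {lo k..hi k}"
    and fin: "\<And>n. finite (I n)"
    and width: "\<And>n. (\<Sum>k\<in>I n. (hi k - lo k)\<^sup>2) = c * real n" "0 < c"
    and drift: "\<And>n. (\<Sum>k\<in>I n. expectation (X k)) \<le> - (\<delta> * real n)" "0 < \<delta>"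
  shows "AE \<omega> in M. eventually (\<lambda>n. (\<Sum>k\<in>I n. X k \<omega>) < 0) sequentially"
proof -
  define E where "E n = {\<omega> \<in> space M. 0 \<le> (\<Sum>k\<in>I n. X k \<omega>)}" for n
  have [measurable]: "X k \<in> borel_measurable M" for k
    using indep by (auto simp: indep_vars_def)
  have E_sets [measurable]: "E n \<in> events" for n
    unfolding E_def by measurable
  define q where "q = exp (- 2 * \<delta>\<^sup>2 / c)"
  have prob_E: "prob (E n) \<le> q ^ n" for n
  proof (cases "n = 0")
    case False
    define \<mu> where "\<mu> = (\<Sum>k\<in>I n. expectation (X k))"
    interpret Hoeffding_ineq M "I n" X lo hi \<mu>
    proof unfold_locales
      show "finite (I n)"
        by (rule fin)
      show "indep_vars (\<lambda>_. borel) X (I n)"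
        using indep by (rule indep_vars_subset) simp
      show "AE \<omega> in M. X k \<omega> \<in> {lo k..hi k}" for k
        by (rule bounded)
    qed (simp add: \<mu>_def)
    have deviation: "0 \<le> \<delta> * real n" "\<delta> * real n \<le> - \<mu>"
      using drift(1)[of n] drift(2) by (simp_all add: \<mu>_def)
    then have "(\<delta> * real n)\<^sup>2 \<le> (- \<mu>)\<^sup>2"
      by (intro power_mono)
    then have "-2 * (- \<mu>)\<^sup>2 / (c * real n) \<le> -2 * (\<delta> * real n)\<^sup>2 / (c * real n)"
      using False width(2) by (intro divide_right_mono) auto
    also have "\<dots> = real n * (- 2 * \<delta>\<^sup>2 / c)"
      using False width(2) by (simp add: power2_eq_square field_simps)
    finally have "exp (-2 * (- \<mu>)\<^sup>2 / (c * real n)) \<le> q ^ n"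
      by (simp add: q_def exp_of_nat_mult [symmetric])
    moreover have "prob {\<omega> \<in> space M. (\<Sum>k\<in>I n. X k \<omega>) \<ge> \<mu> + - \<mu>}
        \<le> exp (-2 * (- \<mu>)\<^sup>2 / (\<Sum>k\<in>I n. (hi k - lo k)\<^sup>2))"
    proof (rule Hoeffding_ineq_ge)
      show "0 \<le> - \<mu>"
        using deviation by linarith
      show "0 < (\<Sum>k\<in>I n. (hi k - lo k)\<^sup>2)"
        using False width by simp
    qed
    ultimately show ?thesis
      by (simp add: E_def width(1))
  qed simp
  have "summable (\<lambda>n. prob (E n))"
  proof (rule summable_comparison_test')
    show "summable (\<lambda>n. q ^ n)"
      using width(2) drift(2) by (intro summable_geometric) (simp add: q_def)
  qed (use prob_E in simp)
  then have "AE \<omega> in M. eventually (\<lambda>n. \<omega> \<in> space M - E n) sequentially"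
    by (intro borel_cantelli_AE1) (auto simp: emeasure_eq_measure)
  then show ?thesis
    by eventually_elim (simp add: E_def not_le eventually_mono)
qed

lemma sum_Inl_Inr:
  "finite J \<Longrightarrow> (\<Sum>k\<in>Inl ` J \<union> Inr ` J. f k) = (\<Sum>j\<in>J. f (Inl j)) + (\<Sum>j\<in>J. f (Inr j))"
  by (subst sum.union_disjoint) (auto simp: sum.reindex)

lemma (in prob_space) eventually_excess_negative:
  fixes a s :: "int \<Rightarrow> 'a \<Rightarrow> bool"
  assumes indep: "indep_vars (\<lambda>_. count_space UNIV) (\<lambda>k. case k of Inl i \<Rightarrow> a i | Inr i \<Rightarrow> s i) UNIV"
    and prob_a: "\<And>i. prob {\<omega> \<in> space M. a i \<omega>} = \<rho>1"
    and prob_s: "\<And>i. prob {\<omega> \<in> space M. s i \<omega>} = \<rho>1 + \<rho>2"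
    and "0 < \<rho>2"
  shows "AE \<omega> in M. eventually (\<lambda>n. excess (\<lambda>i. a i \<omega>) (\<lambda>i. s i \<omega>) 1 (int n) < 0) sequentially"
proof -
  define Y :: "int + int \<Rightarrow> bool \<Rightarrow> real" where
    "Y k b = (case k of Inl _ \<Rightarrow> of_bool b | Inr _ \<Rightarrow> - of_bool b)" for k b
  define X where "X k \<omega> = Y k ((case k of Inl i \<Rightarrow> a i | Inr i \<Rightarrow> s i) \<omega>)" for k \<omega>
  define lo :: "int + int \<Rightarrow> real" where "lo k = (case k of Inl _ \<Rightarrow> 0 | Inr _ \<Rightarrow> -1)" for k
  define hi :: "int + int \<Rightarrow> real" where "hi k = (case k of Inl _ \<Rightarrow> 1 | Inr _ \<Rightarrow> 0)" for k
  define I where "I n = Inl ` {1..int n} \<union> Inr ` {1..int n}" for n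
  have "indep_vars (\<lambda>_. borel) X UNIV"
    unfolding X_def by (rule indep_vars_compose2[OF indep]) simp
  moreover have "AE \<omega> in M. X k \<omega> \<in> {lo k..hi k}" for k
    by (rule AE_I2) (auto simp: X_def Y_def lo_def hi_def split: sum.splits)
  moreover have "(\<Sum>k\<in>I n. (hi k - lo k)\<^sup>2) = 2 * real n" for n
    by (simp add: I_def sum_Inl_Inr lo_def hi_def)
  moreover have "(\<Sum>k\<in>I n. expectation (X k)) \<le> - (\<rho>2 * real n)" for n
  proof -
    have "{\<omega>. P \<omega>} \<inter> space M = {\<omega> \<in> space M. P \<omega>}" for P
      by auto
    moreover have "X (Inl i) = indicator {\<omega>. a i \<omega>}" "X (Inr i) = (\<lambda>\<omega>. - indicator {\<omega>. s i \<omega>} \<omega>)" for i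
      by (auto simp: X_def Y_def indicator_def fun_eq_iff)
    ultimately have expectation_X:
        "expectation (X (Inl i)) = \<rho>1" "expectation (X (Inr i)) = - (\<rho>1 + \<rho>2)" for i
      using prob_a[of i] prob_s[of i] by simp_all
    show ?thesis
      by (simp add: I_def sum_Inl_Inr expectation_X algebra_simps)
  qed
  ultimately have "AE \<omega> in M. eventually (\<lambda>n. (\<Sum>k\<in>I n. X k \<omega>) < 0) sequentially"
    using \<open>0 < \<rho>2\<close> by (intro AE_eventually_sum_negative[where c = 2]) (auto simp: I_def)
  moreover have "(\<Sum>k\<in>I n. X k \<omega>) = of_int (excess (\<lambda>i. a i \<omega>) (\<lambda>i. s i \<omega>) 1 (int n))" for n \<omega>
    by (simp add: I_def sum_Inl_Inr X_def Y_def excess_def cnt_def sum_negf)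
  ultimately show ?thesis
    by simp
qed

theorem lemma5p3:
  fixes M :: "'w measure" and a s :: "int \<Rightarrow> 'w \<Rightarrow> bool" and \<rho>1 \<rho>2 :: real
  assumes "prob_space M"
    and "0 < \<rho>1" "\<rho>1 < 1" "0 < \<rho>2" "\<rho>2 < 1 - \<rho>1"
    and "prob_space.indep_vars M (\<lambda>_. count_space UNIV)
           (\<lambda>k. case k of Inl i \<Rightarrow> a i | Inr i \<Rightarrow> s i) (UNIV :: (int + int) set)"
    and "\<And>i. measure M {\<omega> \<in> space M. a i \<omega>} = \<rho>1"
    and "\<And>i. measure M {\<omega> \<in> space M. s i \<omega>} = \<rho>1 + \<rho>2"
  shows "AE \<omega> in M. \<forall>x::int.
    (let A = (\<lambda>i. a i \<omega>); S = (\<lambda>i. s i \<omega>);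
         h1 = height (dep A S); h2 = height S; hh = height A
     in (SUP j\<in>{0..}. ereal (of_int (h2 j - hh j))) < \<infinity>
      \<and> ereal (of_int (h1 x)) =
          ereal (of_int (hh x))
          + (SUP j\<in>{0..}. ereal (of_int (h2 j - hh j)))
          - (SUP j\<in>{x..}. ereal (of_int (h2 j - h2 x - (hh j - hh x)))))"
proof -
  interpret prob_space M by fact
  have "AE \<omega> in M. eventually (\<lambda>n. excess (\<lambda>i. a i \<omega>) (\<lambda>i. s i \<omega>) 1 (int n) < 0) sequentially"
    using assms(6-8,4) by (rule eventually_excess_negative)
  then show ?thesis
  proof eventually_elim
    case (elim \<omega>)
    define A where "A = (\<lambda>i. a i \<omega>)"
    define S where "S = (\<lambda>i. s i \<omega>)"
    have bdd: "bdd_above ((\<lambda>j. height S j - height A j) ` {0..})"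
      using elim unfolding A_def S_def by (rule walk_bdd_if_eventually_negative)
    have "(SUP j\<in>{0..}. ereal (of_int (height S j - height A j))) = ereal (of_int (2 * queue A S 1))"
      using SUP_height_diff[OF bdd, of 0] by simp
    then show ?case
      using SUP_height_diff[OF bdd] height_dep[OF bdd]
      unfolding Let_def A_def [symmetric] S_def [symmetric] by simp
  qed
qed

end
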